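(* Assume the setting, construction and assumptions (A1)–(A6) described in the context. Then there are positive constants $M,C,c_3,c_4$ such that $$P\Big(\max_{i\le n}|h(Z_i)-h_0(Z_i)|\ge Ms\sqrt{\tfrac{\log(d\vee n)}{n}}\ \Big|\ Y,X,Z\Big)\le C(d\vee n)^{-c_3}$$ on an event $\mathcal{E}_3$ with $P(\mathcal{E}_3)\ge1-(d\vee n)^{-c_3}$, and $$P\Big(\max_{i\le n}|\phi_i-\phi_{0i}|\ge Ms\sqrt{\tfrac{\log(d\vee n)}{n}}\ \Big|\ Y,X,Z\Big)\le C(d\vee n)^{-c_4}$$ on an event $\mathcal{E}_4$ with $P(\mathcal{E}_4)\ge1-(d\vee n)^{-c_4}$.
   Context: Data: for $i=1,\dots,n$, observations $(Y_i,X_i,Z_i)$ with $Y_i\in\{0,1\}$, $X_i\in\{0,1\}$, $Z_i\in\mathbb{R}^d$. The responses are independently generated from $P(Y_i=1\mid X_i,Z_i)=\frac{\exp(X_i\theta_0+Z_i^T\beta_0)}{1+\exp(X_i\theta_0+Z_i^T\beta_0)}$ with true $\theta_0\in\mathbb{R}$, $\beta_0\in\mathbb{R}^d$; $s$ is the number of nonzero entries of $\beta_0$. $P(X_i=1\mid Z_i)$ is the true propensity score. Write $a\vee b=\max\{a,b\}$. Oracle quantities: with $p_{ik}=\frac{\exp(k\theta_0+Z_i^T\beta_0)}{1+\exp(k\theta_0+Z_i^T\beta_0)}$ for $k\in\{0,1\}$, $R_{0i}=\frac{p_{i0}(1-p_{i0})P(X_i=0\mid Z_i)}{p_{i1}(1-p_{i1})P(X_i=1\mid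 Z_i)}$, $h_0(Z_i)=1/(1+R_{0i})$, $\phi_{0i}=\theta_0h_0(Z_i)+Z_i^T\beta_0$. Construction: priors $\pi(\tilde\theta),\pi(\beta),\pi(\gamma)$. Draw $(\tilde\theta,\beta)$ from $f((\tilde\theta,\beta)\mid Y,X,Z)\propto \pi(\tilde\theta)\pi(\beta)\prod_{i=1}^n\frac{\exp(X_i\tilde\theta+Z_i^T\beta)^{Y_i}}{1+\exp(X_i\tilde\theta+Z_i^T\beta)}$ and $\gamma\in\mathbb{R}^d$ from $f(\gamma\mid X,Z)\propto\pi(\gamma)\prod_{i=1}^n\frac{\exp(Z_i^T\gamma)^{X_i}}{1+\exp(Z_i^T\gamma)}$. Set $P(X_i=1\mid Z_i,\gamma)=\frac{\exp(Z_i^T\gamma)}{1+\exp(Z_i^T\gamma)}$, $q_{ik}=\frac{\exp(k\tilde\theta+Z_i^T\beta)}{1+\exp(k\tilde\theta+Z_i^T\beta)}$, $R_i=\frac{q_{i0}(1-q_{i0})P(X_i=0\mid Z_i,\gamma)}{q_{i1}(1-q_{i1})P(X_i=1\mid Z_i,\gamma)}$, $h(Z_i)=1/(1+R_i)$, $\phi_i=\tilde\theta h(Z_i)+Z_i^T\beta$. The probabilities conditional on $Y,X,Z$ in the claim are with respect to these posterior draws. Assumptions: (A1) $\log d=o(n)$. (A2) $\max_{i,j}|Z_{ij}|\le C$ for some $0<C<\infty$. (A3) $s^2\log(d\vee n)=o(\sqrt n)$. (A4) There are constants $M,C,c_1>0$ and an event $\mathcal{E}_1$ with $P(\mathcal{E}_1)\ge1-(d\vee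 n)^{-c_1}$ on which $P\big(\max\{\|(\tilde\theta,\beta)-(\theta_0,\beta_0)\|_1/s,\ \|(\tilde\theta,\beta)-(\theta_0,\beta_0)\|_2/s^{1/2}\}\ge M\sqrt{\log(d\vee n)/n}\mid Y,X,Z\big)\le C(d\vee n)^{-c_1}$. (A5) There are constants $M,C,c_2>0$ and an event $\mathcal{E}_2$ with $P(\mathcal{E}_2)\ge1-(d\vee n)^{-c_2}$ on which $P\Big(\max_{i\le n}\Big|\log\frac{P(X_i=1\mid Z_i,\gamma)/P(X_i=0\mid Z_i,\gamma)}{P(X_i=1\mid Z_i)/P(X_i=0\mid Z_i)}\Big|\ge M\sqrt{\log(d\vee n)/n}\mid X,Z\Big)\le C(d\vee n)^{-c_2}$. (A6) a prior $\pi(\theta)$ is continuous at $\theta_0$ with $\pi(\theta_0)>0$, and $|\theta_0|\le M_0$ for some $M_0>0$. *)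

theory Defs
  imports "HOL-Probability.Probability" "HOL-Library.Landau_Symbols"
begin

definition logistic :: "real \<Rightarrow> real" where
  "logistic t = exp t / (1 + exp t)"

definition lin :: "nat \<Rightarrow> (nat \<Rightarrow> real) \<Rightarrow> (nat \<Rightarrow> real) \<Rightarrow> real" where
  "lin d z b = (\<Sum>j<d. z j * b j)"

definition sparsity :: "nat \<Rightarrow> (nat \<Rightarrow> real) \<Rightarrow> nat" where
  "sparsity d b = card {j\<in>{..<d}. b j \<noteq> 0}"

definition NN :: "nat \<Rightarrow> nat \<Rightarrow> real" where
  "NN d n = real (max d n)"

definition rate :: "nat \<Rightarrow> nat \<Rightarrow> real" where
  "rate d n = sqrt (ln (NN d n) / real n)"

text \<open>Outcome-model likelihood prod_i exp(X_i t + Z_i^T b)^{Y_i} / (1 + exp(X_i t + Z_i^T b))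
  (Y_i in {0,1}, so exp(eta)^{Y_i} = exp(Y_i * eta)).\<close>
definition outcome_lik :: "nat \<Rightarrow> nat \<Rightarrow> (nat \<Rightarrow> real) \<Rightarrow> (nat \<Rightarrow> real) \<Rightarrow> (nat \<Rightarrow> nat \<Rightarrow> real)
    \<Rightarrow> real \<times> (nat \<Rightarrow> real) \<Rightarrow> real" where
  "outcome_lik n d Y X Z = (\<lambda>(t, b). \<Prod>i<n.
      exp (Y i * (X i * t + lin d (Z i) b)) / (1 + exp (X i * t + lin d (Z i) b)))"

definition ps_lik :: "nat \<Rightarrow> nat \<Rightarrow> (nat \<Rightarrow> real) \<Rightarrow> (nat \<Rightarrow> nat \<Rightarrow> real) \<Rightarrow> (nat \<Rightarrow> real) \<Rightarrow> real" where
  "ps_lik n d X Z g = (\<Prod>i<n. exp (X i * lin d (Z i) g) / (1 + exp (lin d (Z i) g)))"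

definition posterior :: "'a measure \<Rightarrow> ('a \<Rightarrow> real) \<Rightarrow> 'a measure" where
  "posterior P L = density P (\<lambda>x. ennreal (L x / (\<integral>y. L y \<partial>P)))"

definition post_tb :: "(real \<Rightarrow> real) \<Rightarrow> (nat \<Rightarrow> real) measure \<Rightarrow> nat \<Rightarrow> nat
    \<Rightarrow> (nat \<Rightarrow> real) \<Rightarrow> (nat \<Rightarrow> real) \<Rightarrow> (nat \<Rightarrow> nat \<Rightarrow> real) \<Rightarrow> (real \<times> (nat \<Rightarrow> real)) measure" where
  "post_tb piT piB n d Y X Z = posterior (density lborel piT \<Otimes>\<^sub>M piB) (outcome_lik n d Y X Z)"

definition post_g :: "(nat \<Rightarrow> real) measure \<Rightarrow> nat \<Rightarrow> nat
    \<Rightarrow> (nat \<Rightarrow> real) \<Rightarrow> (nat \<Rightarrow> nat \<Rightarrow> real) \<Rightarrow> (nat \<Rightarrow> real) measure" where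
  "post_g piG n d X Z = posterior piG (ps_lik n d X Z)"

text \<open>h = 1/(1+R), with R = q0(1-q0) P(X=0|Z) / (q1(1-q1) P(X=1|Z)),
  q_k = logistic(k t + eta), eta = Z^T beta, e = P(X=1|Z).\<close>
definition hval :: "real \<Rightarrow> real \<Rightarrow> real \<Rightarrow> real" where
  "hval t eta e =
     (let q0 = logistic eta; q1 = logistic (t + eta);
          R = (q0 * (1 - q0) * (1 - e)) / (q1 * (1 - q1) * e)
      in 1 / (1 + R))"

definition gen_sigma :: "'w measure \<Rightarrow> ('w \<Rightarrow> real) set \<Rightarrow> 'w measure" where
  "gen_sigma M fs = sigma (space M) {f -` B \<inter> space M | f B. f \<in> fs \<and> B \<in> sets borel}"

definition dist1 :: "nat \<Rightarrow> real \<Rightarrow> (nat \<Rightarrow> real) \<Rightarrow> real \<Rightarrow> (nat \<Rightarrow> real) \<Rightarrow> real" where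
  "dist1 d t b t0 b0 = \<bar>t - t0\<bar> + (\<Sum>j<d. \<bar>b j - b0 j\<bar>)"

definition dist2 :: "nat \<Rightarrow> real \<Rightarrow> (nat \<Rightarrow> real) \<Rightarrow> real \<Rightarrow> (nat \<Rightarrow> real) \<Rightarrow> real" where
  "dist2 d t b t0 b0 = sqrt ((t - t0)\<^sup>2 + (\<Sum>j<d. (b j - b0 j)\<^sup>2))"

end

theory Submission
  imports Defs
begin

text \<open>Let \<open>v x = ln (q (1 - q))\<close> with \<open>q = logistic x\<close>. The weight is
  \<open>h = logistic (v (\<theta> + \<eta>) - v \<eta> + logit e)\<close> with \<open>\<eta> = Z\<^sup>T \<beta>\<close>, and both \<open>logistic\<close> and \<open>v\<close> are
  1-Lipschitz, so \<open>|h - h\<^sub>0| \<le> |\<theta> - \<theta>\<^sub>0| + 2 |Z\<^sup>T (\<beta> - \<beta>\<^sub>0)| + |logit e - logit e\<^sub>0|\<close>. Under (A2) the first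
  two terms are at most \<open>2 C + 1\<close> times the l1-distance of \<open>(\<theta>, \<beta>)\<close> to \<open>(\<theta>\<^sub>0, \<beta>\<^sub>0)\<close>, and the last one
  is the log-odds error of (A5); since \<open>|h| \<le> 1\<close> and \<open>\<theta>\<^sub>0\<close> is bounded, \<open>\<phi>\<close> is controlled in the same
  way. So on the contraction regions of (A4) and (A5) both deviations are \<open>O (s * rate)\<close>. The draws
  of \<open>(\<theta>, \<beta>)\<close> and \<open>\<gamma>\<close> are independent, hence the product posterior gives the complement of the
  product of the two regions at most the sum of the two tail masses, and the two good data events
  intersect in an event of probability at least \<open>1 - (d \<or> n) powr (- c)\<close> with \<open>c = min c\<^sub>1 c\<^sub>2 / 2\<close>.\<close>

lemma measure_Int_ge:
  assumes "prob_space M" "A \<in> sets M" "B \<in> sets M"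
  shows "measure M A + measure M B - 1 \<le> measure M (A \<inter> B)"
proof -
  interpret prob_space M by fact
  have "measure M (A \<union> B) = measure M A + measure M B - measure M (A \<inter> B)"
    using assms(2,3) by (simp add: finite_measure_Union' finite_measure_Diff' measure_Un3 Int_commute)
  moreover have "measure M (A \<union> B) \<le> 1" by simp
  ultimately show ?thesis by linarith
qed

lemma pair_measure_tail_le:
  fixes f1 :: "'a \<Rightarrow> real" and f2 :: "'b \<Rightarrow> real" and F :: "'a \<times> 'b \<Rightarrow> real"
  assumes "subprob_space P1" "subprob_space P2"
    and [measurable]: "f1 \<in> borel_measurable P1" "f2 \<in> borel_measurable P2"
    and "\<And>x y. x \<in> space P1 \<Longrightarrow> y \<in> space P2 \<Longrightarrow> f1 x < a \<Longrightarrow> f2 y < b \<Longrightarrow> F (x, y) < c"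
  shows "measure (P1 \<Otimes>\<^sub>M P2) {z \<in> space (P1 \<Otimes>\<^sub>M P2). F z \<ge> c}
    \<le> measure P1 {x \<in> space P1. f1 x \<ge> a} + measure P2 {y \<in> space P2. f2 y \<ge> b}"
proof -
  interpret pair_subprob_space P1 P2
    using assms(1,2) by (simp add: pair_subprob_space_def pair_sigma_finite_def subprob_space_imp_sigma_finite)
  define A where "A = {x \<in> space P1. f1 x \<ge> a}"
  define B where "B = {y \<in> space P2. f2 y \<ge> b}"
  have "A = f1 -` {a..} \<inter> space P1" "B = f2 -` {b..} \<inter> space P2"
    by (auto simp: A_def B_def)
  then have [measurable]: "A \<in> sets P1" "B \<in> sets P2"
    using measurable_sets[OF assms(3) atLeast_borel] measurable_sets[OF assms(4) atLeast_borel] by simp_all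
  have "{z \<in> space (P1 \<Otimes>\<^sub>M P2). F z \<ge> c} \<subseteq> A \<times> space P2 \<union> space P1 \<times> B"
  proof
    fix z assume "z \<in> {z \<in> space (P1 \<Otimes>\<^sub>M P2). F z \<ge> c}"
    then obtain x y where "z = (x, y)" "x \<in> space P1" "y \<in> space P2" "c \<le> F (x, y)"
      by (cases z) (auto simp: space_pair_measure)
    then show "z \<in> A \<times> space P2 \<union> space P1 \<times> B"
      using assms(5)[of x y] by (auto simp: A_def B_def intro: leI)
  qed
  then have "measure (P1 \<Otimes>\<^sub>M P2) {z \<in> space (P1 \<Otimes>\<^sub>M P2). F z \<ge> c}
      \<le> measure (P1 \<Otimes>\<^sub>M P2) (A \<times> space P2) + measure (P1 \<Otimes>\<^sub>M P2) (space P1 \<times> B)"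
    by (intro order_trans[OF P.finite_measure_mono measure_Un_le]) auto
  also have "\<dots> = measure P1 A * measure P2 (space P2) + measure P1 (space P1) * measure P2 B"
    by (simp add: measure_def M2.emeasure_pair_measure_Times enn2real_mult)
  also have "\<dots> \<le> measure P1 A + measure P2 B"
    using M1.subprob_measure_le_1 M2.subprob_measure_le_1
    by (intro add_mono mult_right_le_one_le mult_left_le_one_le) auto
  finally show ?thesis unfolding A_def B_def .
qed

lemma eventually_powr_le_half:
  fixes N :: "'a \<Rightarrow> real"
  assumes "filterlim N at_top F" "0 < c" "2 * c \<le> c'"
  shows "\<forall>\<^sub>F x in F. N x powr - c' \<le> N x powr - c / 2"
proof -
  have "((\<lambda>x. N x powr - c) \<longlongrightarrow> 0) F"
    using assms(1,2) by (intro tendsto_neg_powr) auto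
  then have "\<forall>\<^sub>F x in F. N x powr - c < 1 / 2"
    by (rule order_tendstoD(2)) simp
  moreover have "\<forall>\<^sub>F x in F. 1 \<le> N x"
    using assms(1) by (simp add: filterlim_at_top)
  ultimately show ?thesis
  proof eventually_elim
    case (elim x)
    have "N x powr - c' \<le> N x powr (- c + - c)"
      using elim assms(3) by (intro powr_mono) auto
    also have "\<dots> = N x powr - c * N x powr - c" by (rule powr_add)
    also have "\<dots> \<le> N x powr - c * (1 / 2)"
      using elim by (intro mult_left_mono) auto
    finally show ?case by simp
  qed
qed

lemma sets_posterior [simp]: "sets (posterior P L) = sets P"
  and space_posterior [simp]: "space (posterior P L) = space P"
  by (simp_all add: posterior_def)

lemma measurable_posterior [simp]: "measurable (posterior P L) N = measurable P N"
  by (rule measurable_cong_sets) simp_all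

text \<open>If the likelihood is not integrable, the normalising constant is the junk value \<open>0\<close>
  and the posterior is the null measure.\<close>
lemma subprob_space_posterior:
  assumes "space P \<noteq> {}" "\<And>x. 0 \<le> L x"
  shows "subprob_space (posterior P L)"
proof (rule subprob_spaceI)
  show "space (posterior P L) \<noteq> {}" using assms(1) by simp
  show "emeasure (posterior P L) (space (posterior P L)) \<le> 1"
  proof (cases "integrable P L")
    case False
    then show ?thesis by (simp add: posterior_def emeasure_density not_integrable_integral_eq)
  next
    case True
    define c where "c = (\<integral>y. L y \<partial>P)"
    have "0 \<le> c" unfolding c_def using assms(2) by (simp add: integral_nonneg)
    have "emeasure (posterior P L) (space P) = (\<integral>\<^sup>+x. ennreal (L x / c) \<partial>P)"
      using True unfolding posterior_def c_def[symmetric] by (simp add: emeasure_density)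
    also have "\<dots> = ennreal (\<integral>x. L x / c \<partial>P)"
      using True assms(2) \<open>0 \<le> c\<close> by (intro nn_integral_eq_integral) auto
    also have "\<dots> \<le> 1" using \<open>0 \<le> c\<close> by (cases "c = 0") (auto simp: c_def)
    finally show ?thesis by simp
  qed
qed

lemma subprob_space_post_tb:
  assumes "prob_space (density lborel piT)" "prob_space piB"
  shows "subprob_space (post_tb piT piB n d Y X Z)"
proof -
  interpret pair_prob_space "density lborel piT" piB
    using assms by (simp add: pair_prob_space_def pair_sigma_finite_def prob_space_imp_sigma_finite)
  show ?thesis
    unfolding post_tb_def using P.not_empty
    by (intro subprob_space_posterior) (auto simp: outcome_lik_def intro!: prod_nonneg)
qed

lemma subprob_space_post_g:
  assumes "prob_space piG"
  shows "subprob_space (post_g piG n d X Z)"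
  unfolding post_g_def using prob_space.not_empty[OF assms]
  by (intro subprob_space_posterior) (auto simp: ps_lik_def intro!: prod_nonneg)

definition logit :: "real \<Rightarrow> real" where
  "logit p = ln (p / (1 - p))"

definition log_logistic_variance :: "real \<Rightarrow> real" where
  "log_logistic_variance x = ln (logistic x * (1 - logistic x))"

lemma one_add_exp_pos [simp]: "0 < 1 + exp (x :: real)"
  and one_add_exp_neq_0 [simp]: "1 + exp (x :: real) \<noteq> 0"
  using exp_gt_zero[of x] by linarith+

lemma logistic_pos: "0 < logistic x" and logistic_less_1: "logistic x < 1"
  by (simp_all add: logistic_def)

lemma one_minus_logistic: "1 - logistic x = 1 / (1 + exp x)"
  by (simp add: logistic_def field_simps)

lemma logistic_eq_inverse: "logistic x = 1 / (1 + exp (- x))"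
  by (simp add: logistic_def exp_minus field_simps)

lemma ln_odds_ratio_eq:
  assumes "0 < p" "p < 1" "0 < q" "q < 1"
  shows "ln ((p / (1 - p)) / (q / (1 - q))) = logit p - logit q"
  using assms by (simp add: logit_def ln_div ln_mult)

lemma abs_diff_le_of_deriv_bound:
  fixes f f' :: "real \<Rightarrow> real"
  assumes "\<And>x. (f has_real_derivative f' x) (at x)" "\<And>x. \<bar>f' x\<bar> \<le> 1"
  shows "\<bar>f a - f b\<bar> \<le> \<bar>a - b\<bar>"
  using field_differentiable_bound[OF convex_UNIV, of f f' 1 a b] assms by simp

lemma logistic_lipschitz: "\<bar>logistic a - logistic b\<bar> \<le> \<bar>a - b\<bar>"
proof (rule abs_diff_le_of_deriv_bound)
  fix x :: real
  show "(logistic has_real_derivative exp x / (1 + exp x)\<^sup>2) (at x)"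
    unfolding logistic_def[abs_def]
    by (auto intro!: derivative_eq_intros simp: power2_eq_square field_simps)
  have "exp x \<le> (1 + exp x)\<^sup>2" by (simp add: power2_eq_square algebra_simps)
  then show "\<bar>exp x / (1 + exp x)\<^sup>2\<bar> \<le> 1" by simp
qed

lemma log_logistic_variance_eq: "log_logistic_variance x = x - 2 * ln (1 + exp x)"
proof -
  have "logistic x * (1 - logistic x) = exp x / (1 + exp x)\<^sup>2"
    unfolding one_minus_logistic by (simp add: logistic_def power2_eq_square)
  then show ?thesis
    using ln_realpow[of "1 + exp x" 2] by (simp add: log_logistic_variance_def ln_div)
qed

lemma log_logistic_variance_lipschitz:
  "\<bar>log_logistic_variance a - log_logistic_variance b\<bar> \<le> \<bar>a - b\<bar>"
proof (rule abs_diff_le_of_deriv_bound)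
  fix x :: real
  show "(log_logistic_variance has_real_derivative 1 - 2 * logistic x) (at x)"
    unfolding log_logistic_variance_eq[abs_def] logistic_def
    by (auto intro!: derivative_eq_intros simp: field_simps)
  show "\<bar>1 - 2 * logistic x\<bar> \<le> 1"
    using logistic_pos[of x] logistic_less_1[of x] by linarith
qed

lemma hval_eq_logistic:
  assumes "0 < e" "e < 1"
  shows "hval t eta e = logistic (log_logistic_variance (t + eta) - log_logistic_variance eta + logit e)"
proof -
  let ?v = log_logistic_variance and ?var = "\<lambda>x. logistic x * (1 - logistic x)"
  have exp_v: "exp (?v x) = ?var x" for x
    using logistic_pos[of x] logistic_less_1[of x] by (simp add: log_logistic_variance_def)
  have exp_logit: "exp (logit e) = e / (1 - e)"
    using assms by (simp add: logit_def)
  have "(?var eta * (1 - e)) / (?var (t + eta) * e) = exp (?v eta) / (exp (?v (t + eta)) * exp (logit e))"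
    using assms unfolding exp_v exp_logit by (simp add: field_simps)
  also have "\<dots> = exp (- (?v (t + eta) - ?v eta + logit e))"
    by (simp add: exp_diff exp_add flip: exp_minus)
  finally show ?thesis
    unfolding hval_def Let_def logistic_eq_inverse[of "?v (t + eta) - ?v eta + logit e"] by simp
qed

lemma hval_abs_le_1: "0 < e \<Longrightarrow> e < 1 \<Longrightarrow> \<bar>hval t eta e\<bar> \<le> 1"
  using hval_eq_logistic logistic_pos logistic_less_1 by (simp add: less_imp_le)

lemma hval_dist_le:
  assumes "0 < e" "e < 1" "0 < e'" "e' < 1"
  shows "\<bar>hval t eta e' - hval t0 eta0 e\<bar> \<le> \<bar>t - t0\<bar> + 2 * \<bar>eta - eta0\<bar> + \<bar>logit e' - logit e\<bar>"
proof -
  let ?v = log_logistic_variance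
  have "\<bar>hval t eta e' - hval t0 eta0 e\<bar>
      \<le> \<bar>(?v (t + eta) - ?v eta + logit e') - (?v (t0 + eta0) - ?v eta0 + logit e)\<bar>"
    unfolding hval_eq_logistic[OF assms(3,4)] hval_eq_logistic[OF assms(1,2)] by (rule logistic_lipschitz)
  also have "\<dots> \<le> \<bar>?v (t + eta) - ?v (t0 + eta0)\<bar> + \<bar>?v eta - ?v eta0\<bar> + \<bar>logit e' - logit e\<bar>"
    by linarith
  also have "\<dots> \<le> \<bar>(t + eta) - (t0 + eta0)\<bar> + \<bar>eta - eta0\<bar> + \<bar>logit e' - logit e\<bar>"
    by (intro add_mono log_logistic_variance_lipschitz order.refl)
  also have "\<dots> \<le> \<bar>t - t0\<bar> + 2 * \<bar>eta - eta0\<bar> + \<bar>logit e' - logit e\<bar>"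
    by (simp add: abs_triangle_ineq[of "t - t0" "eta - eta0", simplified algebra_simps] algebra_simps)
  finally show ?thesis .
qed

lemma lin_dist_le:
  assumes "\<forall>j<d. \<bar>z j\<bar> \<le> C"
  shows "\<bar>lin d z b - lin d z b0\<bar> \<le> C * (\<Sum>j<d. \<bar>b j - b0 j\<bar>)"
proof -
  have "\<bar>lin d z b - lin d z b0\<bar> = \<bar>\<Sum>j<d. z j * (b j - b0 j)\<bar>"
    by (simp add: lin_def sum_subtractf[symmetric] algebra_simps)
  also have "\<dots> \<le> (\<Sum>j<d. \<bar>z j\<bar> * \<bar>b j - b0 j\<bar>)"
    unfolding abs_mult[symmetric] by (rule sum_abs)
  also have "\<dots> \<le> (\<Sum>j<d. C * \<bar>b j - b0 j\<bar>)"
    using assms by (intro sum_mono mult_right_mono) auto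
  finally show ?thesis by (simp add: sum_distrib_left)
qed

lemma dist1_less_controls_predictor:
  assumes "\<forall>j<d. \<bar>z j\<bar> \<le> C" "0 \<le> C" "dist1 d t b t0 b0 < \<delta>"
  shows "\<bar>t - t0\<bar> < \<delta>" and "\<bar>lin d z b - lin d z b0\<bar> \<le> C * \<delta>"
proof -
  have "0 \<le> (\<Sum>j<d. \<bar>b j - b0 j\<bar>)" by (simp add: sum_nonneg)
  with assms(3) show "\<bar>t - t0\<bar> < \<delta>" unfolding dist1_def by linarith
  have "\<bar>lin d z b - lin d z b0\<bar> \<le> C * (\<Sum>j<d. \<bar>b j - b0 j\<bar>)"
    using assms(1) by (rule lin_dist_le)
  also have "\<dots> \<le> C * \<delta>"
    using assms(2,3) \<open>0 \<le> (\<Sum>j<d. \<bar>b j - b0 j\<bar>)\<close> by (intro mult_left_mono) (auto simp: dist1_def)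
  finally show "\<bar>lin d z b - lin d z b0\<bar> \<le> C * \<delta>" .
qed

lemma weighted_sum_deviation_le:
  fixes t h eta t0 h0 eta0 :: real
  assumes "\<bar>h\<bar> \<le> 1" "\<bar>t0\<bar> \<le> M0"
  shows "\<bar>(t * h + eta) - (t0 * h0 + eta0)\<bar> \<le> \<bar>t - t0\<bar> + M0 * \<bar>h - h0\<bar> + \<bar>eta - eta0\<bar>"
proof -
  have "(t * h + eta) - (t0 * h0 + eta0) = (t - t0) * h + t0 * (h - h0) + (eta - eta0)"
    by (simp add: algebra_simps)
  moreover have "\<bar>(t - t0) * h\<bar> \<le> \<bar>t - t0\<bar>"
    using assms(1) by (simp add: abs_mult mult_left_le)
  moreover have "\<bar>t0 * (h - h0)\<bar> \<le> M0 * \<bar>h - h0\<bar>"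
    using assms(2) by (simp add: abs_mult mult_right_mono)
  ultimately show ?thesis by linarith
qed

lemma hval_deviation_lt:
  assumes "\<forall>j<d. \<bar>z j\<bar> \<le> C" "0 \<le> C" "0 < e" "e < 1" "0 < e'" "e' < 1"
    and "dist1 d t b t0 b0 < \<delta>" "\<bar>logit e' - logit e\<bar> < \<epsilon>"
  shows "\<bar>hval t (lin d z b) e' - hval t0 (lin d z b0) e\<bar> < (2 * C + 1) * \<delta> + \<epsilon>"
proof -
  have "\<bar>t - t0\<bar> + 2 * \<bar>lin d z b - lin d z b0\<bar> + \<bar>logit e' - logit e\<bar> < (2 * C + 1) * \<delta> + \<epsilon>"
    using dist1_less_controls_predictor[OF assms(1,2,7)] assms(8) by (simp add: distrib_right)
  then show ?thesis
    using hval_dist_le[OF assms(3-6), of t "lin d z b" t0 "lin d z b0"] by linarith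
qed

lemma weighted_predictor_deviation_lt:
  assumes "\<forall>j<d. \<bar>z j\<bar> \<le> C" "0 \<le> C" "0 < e" "e < 1" "0 < e'" "e' < 1"
    and "dist1 d t b t0 b0 < \<delta>" "\<bar>logit e' - logit e\<bar> < \<epsilon>" "\<bar>t0\<bar> \<le> M0"
  shows "\<bar>(t * hval t (lin d z b) e' + lin d z b) - (t0 * hval t0 (lin d z b0) e + lin d z b0)\<bar>
    < (1 + C) * \<delta> + M0 * ((2 * C + 1) * \<delta> + \<epsilon>)"
proof -
  have "\<bar>(t * hval t (lin d z b) e' + lin d z b) - (t0 * hval t0 (lin d z b0) e + lin d z b0)\<bar>
      \<le> \<bar>t - t0\<bar> + M0 * \<bar>hval t (lin d z b) e' - hval t0 (lin d z b0) e\<bar> + \<bar>lin d z b - lin d z b0\<bar>"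
    using hval_abs_le_1[OF assms(5,6)] assms(9) by (rule weighted_sum_deviation_le)
  moreover have "M0 * \<bar>hval t (lin d z b) e' - hval t0 (lin d z b0) e\<bar> \<le> M0 * ((2 * C + 1) * \<delta> + \<epsilon>)"
    using hval_deviation_lt[OF assms(1-8)] assms(9) by (intro mult_left_mono) auto
  ultimately show ?thesis
    using dist1_less_controls_predictor[OF assms(1,2,7)] by (simp add: distrib_right)
qed

lemma deviations_within_contraction:
  fixes Z :: "nat \<Rightarrow> nat \<Rightarrow> real" and e :: "nat \<Rightarrow> real"
  assumes "0 < n" and Z: "\<And>i. i < n \<Longrightarrow> \<forall>j<d. \<bar>Z i j\<bar> \<le> C" and "0 \<le> C"
    and e: "\<And>i. i < n \<Longrightarrow> 0 < e i \<and> e i < 1" and "\<bar>t0\<bar> \<le> M0"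
    and "1 \<le> s" "0 \<le> r" "0 \<le> MB"
    and tb: "max (dist1 d t b t0 b0 / s) (dist2 d t b t0 b0 / sqrt s) < MA * r"
    and g: "(MAX i\<in>{..<n}. \<bar>ln ((logistic (lin d (Z i) g) / (1 - logistic (lin d (Z i) g)))
                                / (e i / (1 - e i)))\<bar>) < MB * r"
  shows "(MAX i\<in>{..<n}. \<bar>hval t (lin d (Z i) b) (logistic (lin d (Z i) g))
                          - hval t0 (lin d (Z i) b0) (e i)\<bar>)
           < ((2 * C + 1) * MA + MB) * s * r"
    and "(MAX i\<in>{..<n}. \<bar>(t * hval t (lin d (Z i) b) (logistic (lin d (Z i) g)) + lin d (Z i) b)
                          - (t0 * hval t0 (lin d (Z i) b0) (e i) + lin d (Z i) b0)\<bar>)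
           < ((1 + C) * MA + M0 * ((2 * C + 1) * MA + MB)) * s * r"
proof -
  have \<delta>: "dist1 d t b t0 b0 < MA * s * r"
    using tb \<open>1 \<le> s\<close> by (simp add: divide_less_eq mult_ac)
  have "MB * r \<le> MB * s * r"
    using \<open>1 \<le> s\<close> \<open>0 \<le> r\<close> \<open>0 \<le> MB\<close> mult_left_mono[of 1 s "MB * r"] by (simp add: mult_ac)
  moreover have "\<bar>logit (logistic (lin d (Z i) g)) - logit (e i)\<bar> \<le> (MAX i\<in>{..<n}.
      \<bar>ln ((logistic (lin d (Z i) g) / (1 - logistic (lin d (Z i) g))) / (e i / (1 - e i)))\<bar>)"
    if "i < n" for i
    using that e[OF that] ln_odds_ratio_eq[OF logistic_pos logistic_less_1, of "e i"]
    by (intro Max_ge image_eqI[where x = i]) auto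
  ultimately have \<epsilon>: "\<bar>logit (logistic (lin d (Z i) g)) - logit (e i)\<bar> < MB * s * r" if "i < n" for i
    using g that by fastforce
  have "(2 * C + 1) * (MA * s * r) + MB * s * r = ((2 * C + 1) * MA + MB) * s * r"
    and "(1 + C) * (MA * s * r) + M0 * ((2 * C + 1) * (MA * s * r) + MB * s * r)
      = ((1 + C) * MA + M0 * ((2 * C + 1) * MA + MB)) * s * r"
    by (simp_all add: algebra_simps)
  with hval_deviation_lt[OF Z \<open>0 \<le> C\<close> _ _ logistic_pos logistic_less_1 \<delta> \<epsilon>]
      weighted_predictor_deviation_lt[OF Z \<open>0 \<le> C\<close> _ _ logistic_pos logistic_less_1 \<delta> \<epsilon> \<open>\<bar>t0\<bar> \<le> M0\<close>] e
  show "(MAX i\<in>{..<n}. \<bar>hval t (lin d (Z i) b) (logistic (lin d (Z i) g))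
                          - hval t0 (lin d (Z i) b0) (e i)\<bar>)
           < ((2 * C + 1) * MA + MB) * s * r"
    and "(MAX i\<in>{..<n}. \<bar>(t * hval t (lin d (Z i) b) (logistic (lin d (Z i) g)) + lin d (Z i) b)
                          - (t0 * hval t0 (lin d (Z i) b0) (e i) + lin d (Z i) b0)\<bar>)
           < ((1 + C) * MA + M0 * ((2 * C + 1) * MA + MB)) * s * r"
    using \<open>0 < n\<close> by (subst Max_less_iff; force)+
qed

lemma borel_measurable_coordinate:
  assumes "sets N = sets (PiM {..<d} (\<lambda>_. lborel))" "j < d"
  shows "(\<lambda>b. b j) \<in> borel_measurable N"
  using measurable_component_singleton[of j "{..<d}" "\<lambda>_. lborel"] assms
  by (simp add: measurable_cong_sets[OF assms(1) refl])

lemma borel_measurable_lin: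
  assumes "sets N = sets (PiM {..<d} (\<lambda>_. lborel))"
  shows "(\<lambda>b. lin d z b) \<in> borel_measurable N"
  unfolding lin_def
  by (intro borel_measurable_sum borel_measurable_times borel_measurable_const
      borel_measurable_coordinate[OF assms]) auto

lemma borel_measurable_post_tb_deviation:
  assumes "sets piB = sets (PiM {..<d} (\<lambda>_. lborel))"
  shows "(\<lambda>x. max (dist1 d (fst x) (snd x) t0 b0 / s) (dist2 d (fst x) (snd x) t0 b0 / sqrt s))
    \<in> borel_measurable (post_tb piT piB n d Y X Z)"
proof -
  have [measurable]: "(\<lambda>b. b j) \<in> borel_measurable piB" if "j < d" for j
    using borel_measurable_coordinate[OF assms that] .
  show ?thesis
    unfolding post_tb_def measurable_posterior dist1_def dist2_def by measurable
qed

lemma borel_measurable_post_g_deviation: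
  assumes "sets piG = sets (PiM {..<d} (\<lambda>_. lborel))"
  shows "(\<lambda>g. MAX i\<in>{..<n}. \<bar>ln ((logistic (lin d (Z i) g) / (1 - logistic (lin d (Z i) g))) / E i)\<bar>)
    \<in> borel_measurable (post_g piG n d X Z)"
proof -
  have [measurable]: "(\<lambda>g. lin d (Z i) g) \<in> borel_measurable piG" for i
    using borel_measurable_lin[OF assms] .
  show ?thesis
    unfolding post_g_def measurable_posterior logistic_def
    by (intro borel_measurable_Max) auto
qed

lemma eventually_product_posterior_tail_le:
  fixes M :: "nat \<Rightarrow> 'w measure" and P1 :: "nat \<Rightarrow> 'w \<Rightarrow> 'a measure" and P2 :: "nat \<Rightarrow> 'w \<Rightarrow> 'b measure"
    and dev1 :: "nat \<Rightarrow> 'w \<Rightarrow> 'a \<Rightarrow> real" and dev2 :: "nat \<Rightarrow> 'w \<Rightarrow> 'b \<Rightarrow> real"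
    and F :: "nat \<Rightarrow> 'w \<Rightarrow> 'a \<times> 'b \<Rightarrow> real" and N a b \<kappa> \<kappa>' :: "nat \<Rightarrow> real"
  assumes M: "\<And>n. prob_space (M n)"
    and P1: "\<And>n \<omega>. subprob_space (P1 n \<omega>)" and P2: "\<And>n \<omega>. subprob_space (P2 n \<omega>)"
    and dev1: "\<And>n \<omega>. dev1 n \<omega> \<in> borel_measurable (P1 n \<omega>)"
    and dev2: "\<And>n \<omega>. dev2 n \<omega> \<in> borel_measurable (P2 n \<omega>)"
    and N: "filterlim N at_top sequentially" and "0 < c1" "0 < c2" "0 \<le> CA" "0 \<le> CB"
    and ev1: "\<forall>\<^sub>F n in sequentially. \<exists>E1\<in>sets (M n). measure (M n) E1 \<ge> 1 - N n powr (- c1) \<and>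
        (\<forall>\<omega>\<in>E1. measure (P1 n \<omega>) {x \<in> space (P1 n \<omega>). dev1 n \<omega> x \<ge> a n} \<le> CA * N n powr (- c1))"
    and ev2: "\<forall>\<^sub>F n in sequentially. \<exists>E2\<in>sets (M n). measure (M n) E2 \<ge> 1 - N n powr (- c2) \<and>
        (\<forall>\<omega>\<in>E2. measure (P2 n \<omega>) {y \<in> space (P2 n \<omega>). dev2 n \<omega> y \<ge> b n} \<le> CB * N n powr (- c2))"
    and controlled: "\<forall>\<^sub>F n in sequentially. \<forall>\<omega>\<in>space (M n). \<forall>x\<in>space (P1 n \<omega>). \<forall>y\<in>space (P2 n \<omega>).
        dev1 n \<omega> x < a n \<longrightarrow> dev2 n \<omega> y < b n \<longrightarrow> F n \<omega> (x, y) < \<kappa> n"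
    and threshold_le: "\<And>n. \<kappa> n \<le> \<kappa>' n"
  shows "\<forall>\<^sub>F n in sequentially. \<exists>E\<in>sets (M n). measure (M n) E \<ge> 1 - N n powr (- (min c1 c2 / 2)) \<and>
    (\<forall>\<omega>\<in>E. measure (P1 n \<omega> \<Otimes>\<^sub>M P2 n \<omega>) {z \<in> space (P1 n \<omega> \<Otimes>\<^sub>M P2 n \<omega>). F n \<omega> z \<ge> \<kappa>' n}
                \<le> (CA + CB) * N n powr (- (min c1 c2 / 2)))"
proof -
  define c where "c = min c1 c2 / 2"
  have "c > 0" using \<open>0 < c1\<close> \<open>0 < c2\<close> by (simp add: c_def)
  have "\<forall>\<^sub>F n in sequentially. N n powr - c1 \<le> N n powr - c / 2 \<and> N n powr - c2 \<le> N n powr - c / 2"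
    using eventually_powr_le_half[OF N \<open>c > 0\<close>, of c1] eventually_powr_le_half[OF N \<open>c > 0\<close>, of c2]
    by (auto simp: c_def intro: eventually_conj)
  with ev1 ev2 controlled show ?thesis
    unfolding c_def[symmetric]
  proof eventually_elim
    case (elim n)
    from elim(1,2) obtain E1 E2 where E1: "E1 \<in> sets (M n)" "measure (M n) E1 \<ge> 1 - N n powr (- c1)"
        "\<And>\<omega>. \<omega> \<in> E1 \<Longrightarrow> measure (P1 n \<omega>) {x \<in> space (P1 n \<omega>). dev1 n \<omega> x \<ge> a n} \<le> CA * N n powr (- c1)"
      and E2: "E2 \<in> sets (M n)" "measure (M n) E2 \<ge> 1 - N n powr (- c2)"
        "\<And>\<omega>. \<omega> \<in> E2 \<Longrightarrow> measure (P2 n \<omega>) {y \<in> space (P2 n \<omega>). dev2 n \<omega> y \<ge> b n} \<le> CB * N n powr (- c2)"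
      by blast
    show ?case
    proof (intro bexI conjI ballI)
      show "E1 \<inter> E2 \<in> sets (M n)" using E1(1) E2(1) by auto
      show "measure (M n) (E1 \<inter> E2) \<ge> 1 - N n powr (- c)"
        using measure_Int_ge[OF M E1(1) E2(1)] E1(2) E2(2) elim(4) by linarith
    next
      fix \<omega> assume \<omega>: "\<omega> \<in> E1 \<inter> E2"
      then have "\<omega> \<in> space (M n)" using E1(1) sets.sets_into_space by blast
      then have "F n \<omega> (x, y) < \<kappa>' n"
        if "x \<in> space (P1 n \<omega>)" "y \<in> space (P2 n \<omega>)" "dev1 n \<omega> x < a n" "dev2 n \<omega> y < b n" for x y
        using elim(3) that threshold_le[of n] by (meson less_le_trans)
      then have "measure (P1 n \<omega> \<Otimes>\<^sub>M P2 n \<omega>) {z \<in> space (P1 n \<omega> \<Otimes>\<^sub>M P2 n \<omega>). F n \<omega> z \<ge> \<kappa>' n}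
          \<le> measure (P1 n \<omega>) {x \<in> space (P1 n \<omega>). dev1 n \<omega> x \<ge> a n}
            + measure (P2 n \<omega>) {y \<in> space (P2 n \<omega>). dev2 n \<omega> y \<ge> b n}"
        by (rule pair_measure_tail_le[OF P1 P2 dev1 dev2])
      also have "\<dots> \<le> CA * N n powr (- c1) + CB * N n powr (- c2)"
        using E1(3)[OF IntD1[OF \<omega>]] E2(3)[OF IntD2[OF \<omega>]] by linarith
      also have "\<dots> \<le> CA * N n powr (- c) + CB * N n powr (- c)"
        using elim(4) \<open>0 \<le> CA\<close> \<open>0 \<le> CB\<close>
        by (intro add_mono mult_left_mono) (use powr_ge_zero[of "N n" "- c"] in linarith)+
      finally show "measure (P1 n \<omega> \<Otimes>\<^sub>M P2 n \<omega>) {z \<in> space (P1 n \<omega> \<Otimes>\<^sub>M P2 n \<omega>). F n \<omega> z \<ge> \<kappa>' n}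
          \<le> (CA + CB) * N n powr (- c)"
        by (simp add: distrib_right)
    qed
  qed
qed

lemma product_posterior_tail_transfer:
  fixes M :: "nat \<Rightarrow> 'w measure" and P1 :: "nat \<Rightarrow> 'w \<Rightarrow> 'a measure" and P2 :: "nat \<Rightarrow> 'w \<Rightarrow> 'b measure"
    and dev1 :: "nat \<Rightarrow> 'w \<Rightarrow> 'a \<Rightarrow> real" and dev2 :: "nat \<Rightarrow> 'w \<Rightarrow> 'b \<Rightarrow> real"
    and F1 F2 :: "nat \<Rightarrow> 'w \<Rightarrow> 'a \<times> 'b \<Rightarrow> real" and N r s :: "nat \<Rightarrow> real"
  assumes M: "\<And>n. prob_space (M n)"
    and P1: "\<And>n \<omega>. subprob_space (P1 n \<omega>)" and P2: "\<And>n \<omega>. subprob_space (P2 n \<omega>)"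
    and dev1: "\<And>n \<omega>. dev1 n \<omega> \<in> borel_measurable (P1 n \<omega>)"
    and dev2: "\<And>n \<omega>. dev2 n \<omega> \<in> borel_measurable (P2 n \<omega>)"
    and N: "filterlim N at_top sequentially"
    and contraction1: "\<exists>MA CA c1. MA > 0 \<and> CA > 0 \<and> c1 > 0 \<and>
      (\<forall>\<^sub>F n in sequentially. \<exists>E1\<in>sets (M n). measure (M n) E1 \<ge> 1 - N n powr (- c1) \<and>
        (\<forall>\<omega>\<in>E1. measure (P1 n \<omega>) {x \<in> space (P1 n \<omega>). dev1 n \<omega> x \<ge> MA * r n}
                   \<le> CA * N n powr (- c1)))"
    and contraction2: "\<exists>MB CB c2. MB > 0 \<and> CB > 0 \<and> c2 > 0 \<and>
      (\<forall>\<^sub>F n in sequentially. \<exists>E2\<in>sets (M n). measure (M n) E2 \<ge> 1 - N n powr (- c2) \<and>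
        (\<forall>\<omega>\<in>E2. measure (P2 n \<omega>) {y \<in> space (P2 n \<omega>). dev2 n \<omega> y \<ge> MB * r n}
                   \<le> CB * N n powr (- c2)))"
    and s_nonneg: "\<And>n. 0 \<le> s n" and r_nonneg: "\<And>n. 0 \<le> r n"
    and controlled1: "\<And>MA MB. MA > 0 \<Longrightarrow> MB > 0 \<Longrightarrow> \<exists>K. \<forall>\<^sub>F n in sequentially.
      \<forall>\<omega>\<in>space (M n). \<forall>x\<in>space (P1 n \<omega>). \<forall>y\<in>space (P2 n \<omega>).
        dev1 n \<omega> x < MA * r n \<longrightarrow> dev2 n \<omega> y < MB * r n \<longrightarrow> F1 n \<omega> (x, y) < K * s n * r n"
    and controlled2: "\<And>MA MB. MA > 0 \<Longrightarrow> MB > 0 \<Longrightarrow> \<exists>K. \<forall>\<^sub>F n in sequentially.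
      \<forall>\<omega>\<in>space (M n). \<forall>x\<in>space (P1 n \<omega>). \<forall>y\<in>space (P2 n \<omega>).
        dev1 n \<omega> x < MA * r n \<longrightarrow> dev2 n \<omega> y < MB * r n \<longrightarrow> F2 n \<omega> (x, y) < K * s n * r n"
  shows "\<exists>Mc Cc c3 c4. Mc > 0 \<and> Cc > 0 \<and> c3 > 0 \<and> c4 > 0 \<and>
    (\<forall>\<^sub>F n in sequentially.
      (\<exists>E3\<in>sets (M n). measure (M n) E3 \<ge> 1 - N n powr (- c3) \<and>
         (\<forall>\<omega>\<in>E3. measure (P1 n \<omega> \<Otimes>\<^sub>M P2 n \<omega>)
            {z \<in> space (P1 n \<omega> \<Otimes>\<^sub>M P2 n \<omega>). F1 n \<omega> z \<ge> Mc * s n * r n} \<le> Cc * N n powr (- c3))) \<and>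
      (\<exists>E4\<in>sets (M n). measure (M n) E4 \<ge> 1 - N n powr (- c4) \<and>
         (\<forall>\<omega>\<in>E4. measure (P1 n \<omega> \<Otimes>\<^sub>M P2 n \<omega>)
            {z \<in> space (P1 n \<omega> \<Otimes>\<^sub>M P2 n \<omega>). F2 n \<omega> z \<ge> Mc * s n * r n} \<le> Cc * N n powr (- c4))))"
proof -
  obtain MA CA c1 where "MA > 0" "CA > 0" "c1 > 0" and ev1: "\<forall>\<^sub>F n in sequentially.
      \<exists>E1\<in>sets (M n). measure (M n) E1 \<ge> 1 - N n powr (- c1) \<and>
        (\<forall>\<omega>\<in>E1. measure (P1 n \<omega>) {x \<in> space (P1 n \<omega>). dev1 n \<omega> x \<ge> MA * r n} \<le> CA * N n powr (- c1))"
    using contraction1 by blast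
  obtain MB CB c2 where "MB > 0" "CB > 0" "c2 > 0" and ev2: "\<forall>\<^sub>F n in sequentially.
      \<exists>E2\<in>sets (M n). measure (M n) E2 \<ge> 1 - N n powr (- c2) \<and>
        (\<forall>\<omega>\<in>E2. measure (P2 n \<omega>) {y \<in> space (P2 n \<omega>). dev2 n \<omega> y \<ge> MB * r n} \<le> CB * N n powr (- c2))"
    using contraction2 by blast
  obtain K1 where ev_F1: "\<forall>\<^sub>F n in sequentially.
      \<forall>\<omega>\<in>space (M n). \<forall>x\<in>space (P1 n \<omega>). \<forall>y\<in>space (P2 n \<omega>).
        dev1 n \<omega> x < MA * r n \<longrightarrow> dev2 n \<omega> y < MB * r n \<longrightarrow> F1 n \<omega> (x, y) < K1 * s n * r n"
    using controlled1[OF \<open>MA > 0\<close> \<open>MB > 0\<close>] by blast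
  obtain K2 where ev_F2: "\<forall>\<^sub>F n in sequentially.
      \<forall>\<omega>\<in>space (M n). \<forall>x\<in>space (P1 n \<omega>). \<forall>y\<in>space (P2 n \<omega>).
        dev1 n \<omega> x < MA * r n \<longrightarrow> dev2 n \<omega> y < MB * r n \<longrightarrow> F2 n \<omega> (x, y) < K2 * s n * r n"
    using controlled2[OF \<open>MA > 0\<close> \<open>MB > 0\<close>] by blast
  define Mc where "Mc = max (max K1 K2) 1"
  have Mc_ge: "K1 * s n * r n \<le> Mc * s n * r n" "K2 * s n * r n \<le> Mc * s n * r n" for n
    using s_nonneg r_nonneg by (auto simp: Mc_def intro!: mult_right_mono)
  note tail = eventually_product_posterior_tail_le[OF M P1 P2 dev1 dev2 N \<open>c1 > 0\<close> \<open>c2 > 0\<close>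
      less_imp_le[OF \<open>CA > 0\<close>] less_imp_le[OF \<open>CB > 0\<close>] ev1 ev2]
  show ?thesis
    using \<open>CA > 0\<close> \<open>CB > 0\<close> \<open>c1 > 0\<close> \<open>c2 > 0\<close>
    by (intro exI[of _ Mc] exI[of _ "CA + CB"] exI[of _ "min c1 c2 / 2"] conjI
        eventually_conj[OF tail[OF ev_F1 Mc_ge(1)] tail[OF ev_F2 Mc_ge(2)]]) (simp_all add: Mc_def)
qed

lemma filterlim_NN: "filterlim (\<lambda>n. NN (d n) n) at_top sequentially"
  by (rule filterlim_at_top_mono[OF filterlim_real_sequentially]) (simp add: NN_def)

lemma rate_nonneg: "0 \<le> rate d n"
  by (cases "max d n = 0") (auto simp: rate_def NN_def)

theorem lemma3:
  fixes M :: "nat \<Rightarrow> 'w measure"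
    and Yv Xv :: "nat \<Rightarrow> 'w \<Rightarrow> nat \<Rightarrow> real"
    and Zv :: "nat \<Rightarrow> 'w \<Rightarrow> nat \<Rightarrow> nat \<Rightarrow> real"
    and d :: "nat \<Rightarrow> nat"
    and \<theta>0 :: "nat \<Rightarrow> real"
    and \<beta>0 :: "nat \<Rightarrow> nat \<Rightarrow> real"
    and e :: "nat \<Rightarrow> nat \<Rightarrow> (nat \<Rightarrow> real) \<Rightarrow> real"
    and piT :: "real \<Rightarrow> real"
    and piB piG :: "nat \<Rightarrow> (nat \<Rightarrow> real) measure"
  \<comment> \<open>data: for each sample size n a probability space carrying (Y_i, X_i, Z_i), i < n\<close>
  assumes data_prob: "\<And>n. prob_space (M n)"
    and Y_meas: "\<And>n i. (\<lambda>\<omega>. Yv n \<omega> i) \<in> borel_measurable (M n)"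
    and X_meas: "\<And>n i. (\<lambda>\<omega>. Xv n \<omega> i) \<in> borel_measurable (M n)"
    and Z_meas: "\<And>n i j. (\<lambda>\<omega>. Zv n \<omega> i j) \<in> borel_measurable (M n)"
    and YX_binary: "\<And>n \<omega> i. \<omega> \<in> space (M n) \<Longrightarrow> i < n \<Longrightarrow>
                      Yv n \<omega> i \<in> {0, 1} \<and> Xv n \<omega> i \<in> {0, 1}"
    \<comment> \<open>outcome model: given X,Z the Y_i are independent with logistic success probabilities\<close>
    and outcome_model: "\<And>n S. S \<subseteq> {..<n} \<Longrightarrow>
        AE \<omega> in M n.
          real_cond_exp (M n)
            (gen_sigma (M n) ({(\<lambda>\<omega>. Xv n \<omega> i) | i. i < n} \<union>
                              {(\<lambda>\<omega>. Zv n \<omega> i j) | i j. i < n \<and> j < d n}))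
            (\<lambda>\<omega>. \<Prod>i\<in>S. Yv n \<omega> i) \<omega>
          = (\<Prod>i\<in>S. logistic (Xv n \<omega> i * \<theta>0 n + lin (d n) (Zv n \<omega> i) (\<beta>0 n)))"
    \<comment> \<open>true propensity score e n i z = P(X_i = 1 | Z_i = z)\<close>
    and propensity: "\<And>n i. i < n \<Longrightarrow>
        AE \<omega> in M n.
          real_cond_exp (M n) (gen_sigma (M n) {(\<lambda>\<omega>. Zv n \<omega> i j) | j. j < d n})
            (\<lambda>\<omega>. Xv n \<omega> i) \<omega> = e n i (Zv n \<omega> i)"
    and propensity_range: "\<And>n i z. 0 < e n i z \<and> e n i z < 1"
    \<comment> \<open>s >= 1 (needed for the normalisations by s in (A4))\<close>
    and s_pos: "\<And>n. 0 < sparsity (d n) (\<beta>0 n)"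
    \<comment> \<open>priors\<close>
    and piT_nonneg: "\<And>x. 0 \<le> piT x"
    and piT_meas: "piT \<in> borel_measurable lborel"
    and piT_prob: "prob_space (density lborel piT)"
    and piB_prob: "\<And>n. prob_space (piB n)"
    and piB_sets: "\<And>n. sets (piB n) = sets (PiM {..<d n} (\<lambda>_. lborel))"
    and piG_prob: "\<And>n. prob_space (piG n)"
    and piG_sets: "\<And>n. sets (piG n) = sets (PiM {..<d n} (\<lambda>_. lborel))"
    \<comment> \<open>(A1)\<close>
    and A1: "(\<lambda>n. ln (real (d n))) \<in> o(\<lambda>n. real n)"
    \<comment> \<open>(A2)\<close>
    and A2: "\<exists>CZ>0. \<forall>n. \<forall>\<omega>\<in>space (M n). \<forall>i<n. \<forall>j<d n. \<bar>Zv n \<omega> i j\<bar> \<le> CZ"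
    \<comment> \<open>(A3)\<close>
    and A3: "(\<lambda>n. real (sparsity (d n) (\<beta>0 n)) ^ 2 * ln (NN (d n) n)) \<in> o(\<lambda>n. sqrt (real n))"
    \<comment> \<open>(A4): posterior contraction of (theta~, beta)\<close>
    and A4: "\<exists>MA CA c1. MA > 0 \<and> CA > 0 \<and> c1 > 0 \<and>
        (\<forall>\<^sub>F n in sequentially. \<exists>E1\<in>sets (M n).
            measure (M n) E1 \<ge> 1 - NN (d n) n powr (- c1) \<and>
            (\<forall>\<omega>\<in>E1.
               measure (post_tb piT (piB n) n (d n) (Yv n \<omega>) (Xv n \<omega>) (Zv n \<omega>))
                 {x \<in> space (post_tb piT (piB n) n (d n) (Yv n \<omega>) (Xv n \<omega>) (Zv n \<omega>)).
                    case x of (t, b) \<Rightarrow>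
                      max (dist1 (d n) t b (\<theta>0 n) (\<beta>0 n) / real (sparsity (d n) (\<beta>0 n)))
                          (dist2 (d n) t b (\<theta>0 n) (\<beta>0 n) / sqrt (real (sparsity (d n) (\<beta>0 n))))
                      \<ge> MA * rate (d n) n}
               \<le> CA * NN (d n) n powr (- c1)))"
    \<comment> \<open>(A5): posterior contraction of the propensity log-odds\<close>
    and A5: "\<exists>MB CB c2. MB > 0 \<and> CB > 0 \<and> c2 > 0 \<and>
        (\<forall>\<^sub>F n in sequentially. \<exists>E2\<in>sets (M n).
            measure (M n) E2 \<ge> 1 - NN (d n) n powr (- c2) \<and>
            (\<forall>\<omega>\<in>E2.
               measure (post_g (piG n) n (d n) (Xv n \<omega>) (Zv n \<omega>))
                 {g \<in> space (post_g (piG n) n (d n) (Xv n \<omega>) (Zv n \<omega>)).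
                    (MAX i\<in>{..<n}.
                       \<bar>ln ((logistic (lin (d n) (Zv n \<omega> i) g) / (1 - logistic (lin (d n) (Zv n \<omega> i) g)))
                            / (e n i (Zv n \<omega> i) / (1 - e n i (Zv n \<omega> i))))\<bar>)
                    \<ge> MB * rate (d n) n}
               \<le> CB * NN (d n) n powr (- c2)))"
    \<comment> \<open>(A6)\<close>
    and A6_cont: "\<And>n. isCont piT (\<theta>0 n)"
    and A6_pos: "\<And>n. piT (\<theta>0 n) > 0"
    and A6_bound: "\<exists>M0>0. \<forall>n. \<bar>\<theta>0 n\<bar> \<le> M0"
  shows "\<exists>Mc Cc c3 c4. Mc > 0 \<and> Cc > 0 \<and> c3 > 0 \<and> c4 > 0 \<and>
    (\<forall>\<^sub>F n in sequentially.
      (\<exists>E3\<in>sets (M n).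
         measure (M n) E3 \<ge> 1 - NN (d n) n powr (- c3) \<and>
         (\<forall>\<omega>\<in>E3.
            measure (post_tb piT (piB n) n (d n) (Yv n \<omega>) (Xv n \<omega>) (Zv n \<omega>)
                       \<Otimes>\<^sub>M post_g (piG n) n (d n) (Xv n \<omega>) (Zv n \<omega>))
              {x \<in> space (post_tb piT (piB n) n (d n) (Yv n \<omega>) (Xv n \<omega>) (Zv n \<omega>)
                            \<Otimes>\<^sub>M post_g (piG n) n (d n) (Xv n \<omega>) (Zv n \<omega>)).
                 case x of ((t, b), g) \<Rightarrow>
                   (MAX i\<in>{..<n}.
                      \<bar>hval t (lin (d n) (Zv n \<omega> i) b) (logistic (lin (d n) (Zv n \<omega> i) g))
                       - hval (\<theta>0 n) (lin (d n) (Zv n \<omega> i) (\<beta>0 n)) (e n i (Zv n \<omega> i))\<bar>)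
                   \<ge> Mc * real (sparsity (d n) (\<beta>0 n)) * rate (d n) n}
            \<le> Cc * NN (d n) n powr (- c3))) \<and>
      (\<exists>E4\<in>sets (M n).
         measure (M n) E4 \<ge> 1 - NN (d n) n powr (- c4) \<and>
         (\<forall>\<omega>\<in>E4.
            measure (post_tb piT (piB n) n (d n) (Yv n \<omega>) (Xv n \<omega>) (Zv n \<omega>)
                       \<Otimes>\<^sub>M post_g (piG n) n (d n) (Xv n \<omega>) (Zv n \<omega>))
              {x \<in> space (post_tb piT (piB n) n (d n) (Yv n \<omega>) (Xv n \<omega>) (Zv n \<omega>)
                            \<Otimes>\<^sub>M post_g (piG n) n (d n) (Xv n \<omega>) (Zv n \<omega>)).
                 case x of ((t, b), g) \<Rightarrow>
                   (MAX i\<in>{..<n}.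
                      \<bar>(t * hval t (lin (d n) (Zv n \<omega> i) b) (logistic (lin (d n) (Zv n \<omega> i) g))
                          + lin (d n) (Zv n \<omega> i) b)
                       - (\<theta>0 n * hval (\<theta>0 n) (lin (d n) (Zv n \<omega> i) (\<beta>0 n)) (e n i (Zv n \<omega> i))
                          + lin (d n) (Zv n \<omega> i) (\<beta>0 n))\<bar>)
                   \<ge> Mc * real (sparsity (d n) (\<beta>0 n)) * rate (d n) n}
            \<le> Cc * NN (d n) n powr (- c4))))"
proof -
  \<comment> \<open>Only (A2), (A4), (A5) and the bound on \<open>\<theta>\<^sub>0\<close> enter; the remaining hypotheses are what the
    paper needs to establish (A4) and (A5).\<close>
  obtain CZ where "0 < CZ"
    and Z_bound: "\<And>n \<omega> i j. \<omega> \<in> space (M n) \<Longrightarrow> i < n \<Longrightarrow> j < d n \<Longrightarrow> \<bar>Zv n \<omega> i j\<bar> \<le> CZ"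
    using A2 by blast
  obtain M0 where \<theta>0_bound: "\<And>n. \<bar>\<theta>0 n\<bar> \<le> M0" using A6_bound by blast
  show ?thesis
    unfolding split_beta
    apply (rule product_posterior_tail_transfer[OF data_prob
          subprob_space_post_tb[OF piT_prob piB_prob] subprob_space_post_g[OF piG_prob]
          borel_measurable_post_tb_deviation[OF piB_sets] borel_measurable_post_g_deviation[OF piG_sets]
          filterlim_NN A4[unfolded split_beta] A5 of_nat_0_le_iff rate_nonneg])
    subgoal for MA MB
      by (intro exI[of _ "(2 * CZ + 1) * MA + MB"] eventually_mono[OF eventually_gt_at_top[of 0]] ballI impI)
        (simp only: fst_conv snd_conv, rule deviations_within_contraction(1),
          auto simp: Z_bound propensity_range \<theta>0_bound Suc_le_eq s_pos rate_nonneg less_imp_le \<open>0 < CZ\<close>)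
    subgoal for MA MB
      by (intro exI[of _ "(1 + CZ) * MA + M0 * ((2 * CZ + 1) * MA + MB)"]
          eventually_mono[OF eventually_gt_at_top[of 0]] ballI impI)
        (simp only: fst_conv snd_conv, rule deviations_within_contraction(2),
          auto simp: Z_bound propensity_range \<theta>0_bound Suc_le_eq s_pos rate_nonneg less_imp_le \<open>0 < CZ\<close>)
    done
qed

end
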